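(* Let $n,d\ge 0$ be integers and let $G\subseteq\mathbb{N}$ be infinite (so $G\approx\omega$). Then there exists $H\subseteq\omega^d$ with $H\approx\omega^d$ such that every $e\in\binom{H}{n}$ satisfies some coloring rule on $\binom{\omega^d}{n}$, and every coefficient of every element of $e$ lies in $G$.
   Context: Ordinals are identified with the sets of smaller ordinals; $\approx$ is order-equivalence; $\binom{S}{n}$ is the set of $n$-element subsets of $S$. Every $\beta<\omega^d\cdot k$ ($d,k\ge0$) is uniquely written $\beta=\omega^d\cdot b+\omega^{d-1}a_{d-1}+\cdots+\omega a_1+a_0$ with $0\le b<k$, $a_j\in\mathbb{N}$; the numbers $a_0,\dots,a_{d-1}$ are called the coefficients of $\beta$; here $\omega^d=\omega^d\cdot1$. A coloring rule (CR) on $\binom{\omega^d\cdot k}{n}$ is a pair $(\mathcal{Y},\preceq)$ with $\mathcal{Y}:\{1,\dots,n\}\to\{0,\dots,k-1\}$ and $\preceq$ a total preorder on $I=\{(i,j):1\le i\le n,0\le j<d\}$ (write $\equiv$ for the induced equivalence and $\prec$ for the strict part) such that: (1) if $d\ge1$, $(i,0)\prec(i',0)$ for $i<i'$; if $d=0$, $\mathcal{Y}(i)<\mathcal{Y}(i')$ for $i<i'$; (2) $(i,j)\equiv(i',j)$ for some $j$ implies $\mathcal{Y}(i)=\mathcal{Y}(i')$; (3) $(i,j)\prec(i,j')$ for $j>j'$; (4) $(i,j)\equiv(i',j')$ implies $j=j'$; (5) for $j>0$, $(i,j)\not\equiv(i',j)$ implies $(i,j-1)\not\equiv(i',j-1)$.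 An edge $e\in\binom{\omega^d\cdot k}{n}$ satisfies the CR $(\mathcal{Y},\preceq)$ if its elements can be enumerated as $p_i=\omega^d b_i+\sum_{j<d}\omega^j a_{i,j}$ ($1\le i\le n$) so that $b_i=\mathcal{Y}(i)$ for all $i$ and $(i,j)\preceq(i',j')\iff a_{i,j}\le a_{i',j'}$ for all $(i,j),(i',j')\in I$. *)

theory Defs
  imports Main
begin

text \<open>Concrete representation of the ordinal \<omega>^d\<cdot>k: an ordinal
  \<beta> = \<omega>^d\<cdot>b + \<omega>^(d-1) a_(d-1) + ... + a_0 is represented by the pair
  (b, as) where as is the list of coefficients with as ! j = a_j.\<close>

definition ord_set :: "nat \<Rightarrow> nat \<Rightarrow> (nat \<times> nat list) set" where
  "ord_set d k = {(b, as). b < k \<and> length as = d}"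

definition ord_less :: "nat \<times> nat list \<Rightarrow> nat \<times> nat list \<Rightarrow> bool" where
  "ord_less x y \<longleftrightarrow> fst x < fst y \<or>
     (fst x = fst y \<and> (\<exists>j < length (snd x). snd x ! j < snd y ! j \<and>
        (\<forall>j'. j < j' \<and> j' < length (snd x) \<longrightarrow> snd x ! j' = snd y ! j')))"

definition order_equiv :: "(nat \<times> nat list) set \<Rightarrow> (nat \<times> nat list) set \<Rightarrow> bool" where
  "order_equiv A B \<longleftrightarrow> (\<exists>f. bij_betw f A B \<and>
     (\<forall>x\<in>A. \<forall>y\<in>A. ord_less x y \<longleftrightarrow> ord_less (f x) (f y)))"

definition index_set :: "nat \<Rightarrow> nat \<Rightarrow> (nat \<times> nat) set" where
  "index_set n d = {1..n} \<times> {0..<d}"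

definition total_preorder_on :: "'a set \<Rightarrow> ('a \<times> 'a) set \<Rightarrow> bool" where
  "total_preorder_on A R \<longleftrightarrow> R \<subseteq> A \<times> A \<and> (\<forall>x\<in>A. (x, x) \<in> R) \<and> trans R \<and>
     (\<forall>x\<in>A. \<forall>y\<in>A. (x, y) \<in> R \<or> (y, x) \<in> R)"

definition pre_strict :: "('a \<times> 'a) set \<Rightarrow> 'a \<Rightarrow> 'a \<Rightarrow> bool" where
  "pre_strict R x y \<longleftrightarrow> (x, y) \<in> R \<and> (y, x) \<notin> R"

definition pre_equiv :: "('a \<times> 'a) set \<Rightarrow> 'a \<Rightarrow> 'a \<Rightarrow> bool" where
  "pre_equiv R x y \<longleftrightarrow> (x, y) \<in> R \<and> (y, x) \<in> R"

definition coloring_rule :: "nat \<Rightarrow> nat \<Rightarrow> nat \<Rightarrow> (nat \<Rightarrow> nat) \<Rightarrow> ((nat \<times> nat) \<times> (nat \<times> nat)) set \<Rightarrow> bool" where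
  "coloring_rule d k n Y R \<longleftrightarrow>
     (\<forall>i\<in>{1..n}. Y i < k) \<and>
     total_preorder_on (index_set n d) R \<and>
     (d \<ge> 1 \<longrightarrow> (\<forall>i\<in>{1..n}. \<forall>i'\<in>{1..n}. i < i' \<longrightarrow> pre_strict R (i, 0) (i', 0))) \<and>
     (d = 0 \<longrightarrow> (\<forall>i\<in>{1..n}. \<forall>i'\<in>{1..n}. i < i' \<longrightarrow> Y i < Y i')) \<and>
     (\<forall>i\<in>{1..n}. \<forall>i'\<in>{1..n}. \<forall>j<d. pre_equiv R (i, j) (i', j) \<longrightarrow> Y i = Y i') \<and>
     (\<forall>i\<in>{1..n}. \<forall>j<d. \<forall>j'<d. j > j' \<longrightarrow> pre_strict R (i, j) (i, j')) \<and>
     (\<forall>i\<in>{1..n}. \<forall>i'\<in>{1..n}. \<forall>j<d. \<forall>j'<d. pre_equiv R (i, j) (i', j') \<longrightarrow> j = j') \<and>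
     (\<forall>i\<in>{1..n}. \<forall>i'\<in>{1..n}. \<forall>j<d. j > 0 \<longrightarrow>
        \<not> pre_equiv R (i, j) (i', j) \<longrightarrow> \<not> pre_equiv R (i, j - 1) (i', j - 1))"

definition satisfies_CR :: "nat \<Rightarrow> nat \<Rightarrow> (nat \<Rightarrow> nat) \<Rightarrow> ((nat \<times> nat) \<times> (nat \<times> nat)) set
    \<Rightarrow> (nat \<times> nat list) set \<Rightarrow> bool" where
  "satisfies_CR d n Y R e \<longleftrightarrow> (\<exists>p. bij_betw p {1..n} e \<and>
     (\<forall>i\<in>{1..n}. fst (p i) = Y i) \<and>
     (\<forall>i\<in>{1..n}. \<forall>j<d. \<forall>i'\<in>{1..n}. \<forall>j'<d.
        ((i, j), (i', j')) \<in> R \<longleftrightarrow> snd (p i) ! j \<le> snd (p i') ! j'))"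

end

(*
  Let g enumerate G increasingly and replace the coefficient list (a_0, ..., a_(d-1))
  of an ordinal below \<omega>^d by the list whose j-th entry is g applied to the code of
  the tail (a_j, ..., a_(d-1)) under the injective list encoding of Nat_Bijection.
  That encoding grows when an element is prepended and is monotone in the head, so:
  new coefficients determine their tails, hence coincide only at equal positions, and
  coincidence at position j - 1 propagates to position j; within one ordinal they
  strictly decrease with j; and the ordinal order, which is lexicographic from the top
  coefficient, is preserved. Listing an edge of the image by its 0-th coefficients,
  the preorder "compare the coefficients" is therefore a coloring rule it satisfies.
*)

theory Submission
  imports Defs "HOL-Library.Nat_Bijection" "HOL-Library.Infinite_Set"
begin

lemma list_encode_less_Cons: "list_encode l < list_encode (a # l)"
  using le_prod_encode_2[of "list_encode l" a] by simp

lemma prod_encode_less_same_snd_iff: "prod_encode (a, m) < prod_encode (b, m) \<longleftrightarrow> a < b"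
proof -
  have "mono triangle"
    by (simp add: mono_iff_le_Suc)
  then have "a < b \<Longrightarrow> prod_encode (a, m) < prod_encode (b, m)" for a b
    using monoD[of triangle "a + m" "b + m"] by (simp add: prod_encode_def)
  then show ?thesis
    by (metis linorder_neqE_nat order_less_asym)
qed

lemma list_encode_drop_Suc_less:
  "j < length as \<Longrightarrow> list_encode (drop (Suc j) as) < list_encode (drop j as)"
  by (metis Cons_nth_drop_Suc list_encode_less_Cons)

lemma list_encode_drop_strict_antimono:
  assumes "j < j'" "j' \<le> length as"
  shows "list_encode (drop j' as) < list_encode (drop j as)"
  using assms
proof (induction j' rule: less_induct)
  case (less j')
  then obtain j'' where j'': "j' = Suc j''" "j \<le> j''"
    by (metis less_imp_Suc_add le_add1)
  then have "list_encode (drop j' as) < list_encode (drop j'' as)"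
    using less.prems by (simp add: list_encode_drop_Suc_less)
  also have "\<dots> \<le> list_encode (drop j as)"
    using less j'' by (cases "j = j''") (auto intro: less_imp_le)
  finally show ?case .
qed

lemma nth_agree_above_iff_drop_Suc_eq:
  assumes "length as = length bs"
  shows "(\<forall>j'. j < j' \<and> j' < length as \<longrightarrow> as ! j' = bs ! j') \<longleftrightarrow> drop (Suc j) as = drop (Suc j) bs"
proof
  assume "\<forall>j'. j < j' \<and> j' < length as \<longrightarrow> as ! j' = bs ! j'"
  then show "drop (Suc j) as = drop (Suc j) bs"
    using assms by (intro nth_equalityI) auto
next
  assume drop_eq: "drop (Suc j) as = drop (Suc j) bs"
  show "\<forall>j'. j < j' \<and> j' < length as \<longrightarrow> as ! j' = bs ! j'"
  proof (intro allI impI)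
    fix j' assume "j < j' \<and> j' < length as"
    then show "as ! j' = bs ! j'"
      using arg_cong[OF drop_eq, of "\<lambda>xs. xs ! (j' - Suc j)"] assms by simp
  qed
qed

definition suffix_codes :: "(nat \<Rightarrow> nat) \<Rightarrow> nat list \<Rightarrow> nat list" where
  "suffix_codes g as = map (\<lambda>j. g (list_encode (drop j as))) [0..<length as]"

lemma length_suffix_codes [simp]: "length (suffix_codes g as) = length as"
  by (simp add: suffix_codes_def)

lemma nth_suffix_codes [simp]:
  "j < length as \<Longrightarrow> suffix_codes g as ! j = g (list_encode (drop j as))"
  by (simp add: suffix_codes_def)

lemma suffix_codes_nth_eq_iff:
  assumes "strict_mono g" "j < length as" "j' < length bs"
  shows "suffix_codes g as ! j = suffix_codes g bs ! j' \<longleftrightarrow> drop j as = drop j' bs"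
  using assms by (simp add: strict_mono_eq list_encode_eq)

lemma inj_suffix_codes:
  assumes "strict_mono g"
  shows "inj (suffix_codes g)"
proof
  fix as bs assume eq: "suffix_codes g as = suffix_codes g bs"
  then have "length as = length bs"
    by (metis length_suffix_codes)
  show "as = bs"
  proof (cases "as = []")
    case True
    then show ?thesis
      using \<open>length as = length bs\<close> by simp
  next
    case False
    then have nonempty: "0 < length as" "0 < length bs"
      using \<open>length as = length bs\<close> by auto
    then show ?thesis
      using eq suffix_codes_nth_eq_iff[OF assms nonempty] by simp
  qed
qed

lemma suffix_codes_nth_eq_imp_same_index:
  assumes "strict_mono g" "length as = length bs" "j < length as" "j' < length bs"
    and "suffix_codes g as ! j = suffix_codes g bs ! j'"
  shows "j = j'"
proof -
  have "length (drop j as) = length (drop j' bs)"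
    using assms suffix_codes_nth_eq_iff by metis
  then show ?thesis
    using assms(2-4) by simp
qed

lemma suffix_codes_nth_eq_imp_nth_Suc_eq:
  assumes "strict_mono g" "length as = length bs" "Suc j < length as"
    and "suffix_codes g as ! j = suffix_codes g bs ! j"
  shows "suffix_codes g as ! Suc j = suffix_codes g bs ! Suc j"
proof -
  have "drop j as = drop j bs"
    using assms suffix_codes_nth_eq_iff by (metis Suc_lessD)
  then have "drop (Suc j) as = drop (Suc j) bs"
    by (metis drop_Suc tl_drop)
  then show ?thesis
    using assms(2,3) by simp
qed

lemma suffix_codes_strict_antimono:
  assumes "strict_mono g" "j' < j" "j < length as"
  shows "suffix_codes g as ! j < suffix_codes g as ! j'"
  using assms list_encode_drop_strict_antimono[of j' j as] by (simp add: strict_mono_less)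

lemma drop_suffix_codes: "drop k (suffix_codes g as) = suffix_codes g (drop k as)"
  by (simp add: list_eq_iff_nth_eq add.commute)

lemma suffix_codes_agree_above_iff_drop_Suc_eq:
  assumes "strict_mono g" "length as = length bs"
  shows "(\<forall>j'. j < j' \<and> j' < length as \<longrightarrow> suffix_codes g as ! j' = suffix_codes g bs ! j')
    \<longleftrightarrow> drop (Suc j) as = drop (Suc j) bs"
  using nth_agree_above_iff_drop_Suc_eq[of "suffix_codes g as" "suffix_codes g bs" j]
    inj_suffix_codes[OF assms(1)] assms(2)
  by (simp add: drop_suffix_codes inj_eq)

lemma suffix_codes_nth_less_iff:
  assumes "strict_mono g" "j < length as" "j < length bs"
    and "drop (Suc j) as = drop (Suc j) bs"
  shows "suffix_codes g as ! j < suffix_codes g bs ! j \<longleftrightarrow> as ! j < bs ! j"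
proof -
  have "drop j as = as ! j # drop (Suc j) as" "drop j bs = bs ! j # drop (Suc j) as"
    using assms(2-4) Cons_nth_drop_Suc by metis+
  then show ?thesis
    using assms(1-3) by (simp add: strict_mono_less prod_encode_less_same_snd_iff)
qed

lemma ord_less_apsnd_suffix_codes_iff:
  assumes "strict_mono g" "length (snd x) = length (snd y)"
  shows "ord_less (apsnd (suffix_codes g) x) (apsnd (suffix_codes g) y) \<longleftrightarrow> ord_less x y"
proof -
  obtain a as b bs where xy: "x = (a, as)" "y = (b, bs)"
    by force
  have "(suffix_codes g as ! j < suffix_codes g bs ! j \<and>
      (\<forall>j'. j < j' \<and> j' < length as \<longrightarrow> suffix_codes g as ! j' = suffix_codes g bs ! j')) \<longleftrightarrow>
    (as ! j < bs ! j \<and> (\<forall>j'. j < j' \<and> j' < length as \<longrightarrow> as ! j' = bs ! j'))"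
    if "j < length as" for j
    using that assms xy suffix_codes_nth_less_iff suffix_codes_agree_above_iff_drop_Suc_eq
      nth_agree_above_iff_drop_Suc_eq by (metis snd_conv)
  then show ?thesis
    unfolding ord_less_def using xy by (simp del: nth_suffix_codes) blast
qed

lemma order_equiv_image:
  assumes "inj_on f A" and "\<And>x y. x \<in> A \<Longrightarrow> y \<in> A \<Longrightarrow> ord_less (f x) (f y) \<longleftrightarrow> ord_less x y"
  shows "order_equiv (f ` A) A"
  unfolding order_equiv_def
proof (intro exI conjI ballI)
  show "bij_betw (the_inv_into A f) (f ` A) A"
    using assms(1) by (simp add: bij_betw_the_inv_into inj_on_imp_bij_betw)
  fix u v assume "u \<in> f ` A" "v \<in> f ` A"
  then show "ord_less u v \<longleftrightarrow> ord_less (the_inv_into A f u) (the_inv_into A f v)"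
    using assms by (auto simp: the_inv_into_f_f)
qed

lemma ex_enumeration_sorted_by:
  fixes \<kappa> :: "'a \<Rightarrow> 'b::wellorder"
  assumes "finite e" "inj_on \<kappa> e"
  obtains p where "bij_betw p {1..card e} e"
    and "\<And>i i'. i \<in> {1..card e} \<Longrightarrow> i' \<in> {1..card e} \<Longrightarrow> i < i' \<Longrightarrow> \<kappa> (p i) < \<kappa> (p i')"
proof
  let ?K = "\<kappa> ` e"
  have card_K: "card ?K = card e"
    using assms by (simp add: card_image)
  have "bij_betw (\<lambda>i. i - 1) {1..card e} {..<card e}"
    by (rule bij_betw_byWitness[where f' = Suc]) auto
  moreover have "bij_betw (enumerate ?K) {..<card e} ?K"
    using finite_bij_enumerate[of ?K] assms(1) card_K by simp
  moreover have "bij_betw (the_inv_into e \<kappa>) ?K e"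
    using assms(2) by (simp add: bij_betw_the_inv_into inj_on_imp_bij_betw)
  ultimately show "bij_betw (the_inv_into e \<kappa> \<circ> enumerate ?K \<circ> (\<lambda>i. i - 1)) {1..card e} e"
    by (auto intro: bij_betw_trans)
  fix i i' assume "i \<in> {1..card e}" "i' \<in> {1..card e}" "i < i'"
  then show "\<kappa> ((the_inv_into e \<kappa> \<circ> enumerate ?K \<circ> (\<lambda>i. i - 1)) i)
      < \<kappa> ((the_inv_into e \<kappa> \<circ> enumerate ?K \<circ> (\<lambda>i. i - 1)) i')"
    using assms card_K finite_enumerate_in_set[of ?K] finite_enumerate_mono[of "i - 1" "i' - 1" ?K]
    by (simp add: f_the_inv_into_f)
qed

definition induced_preorder :: "nat \<Rightarrow> nat \<Rightarrow> (nat \<Rightarrow> nat \<Rightarrow> nat) \<Rightarrow> ((nat \<times> nat) \<times> (nat \<times> nat)) set" where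
  "induced_preorder n d V =
    {((i, j), (i', j')). (i, j) \<in> index_set n d \<and> (i', j') \<in> index_set n d \<and> V i j \<le> V i' j'}"

lemma total_preorder_on_induced_preorder: "total_preorder_on (index_set n d) (induced_preorder n d V)"
  unfolding total_preorder_on_def induced_preorder_def by (auto intro: transI)

lemma induced_preorder_iff:
  assumes "i \<in> {1..n}" "i' \<in> {1..n}" "j < d" "j' < d"
  shows "((i, j), (i', j')) \<in> induced_preorder n d V \<longleftrightarrow> V i j \<le> V i' j'"
  using assms by (simp add: induced_preorder_def index_set_def)

lemma pre_strict_induced_preorder_iff:
  assumes "i \<in> {1..n}" "i' \<in> {1..n}" "j < d" "j' < d"
  shows "pre_strict (induced_preorder n d V) (i, j) (i', j') \<longleftrightarrow> V i j < V i' j'"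
  using assms by (auto simp: pre_strict_def induced_preorder_iff)

lemma pre_equiv_induced_preorder_iff:
  assumes "i \<in> {1..n}" "i' \<in> {1..n}" "j < d" "j' < d"
  shows "pre_equiv (induced_preorder n d V) (i, j) (i', j') \<longleftrightarrow> V i j = V i' j'"
  using assms by (auto simp: pre_equiv_def induced_preorder_iff)

lemma coloring_rule_induced_preorder:
  assumes "d = 0 \<Longrightarrow> n \<le> 1"
    and "\<And>i i'. i \<in> {1..n} \<Longrightarrow> i' \<in> {1..n} \<Longrightarrow> i < i' \<Longrightarrow> 0 < d \<Longrightarrow> V i 0 < V i' 0"
    and "\<And>i j j'. i \<in> {1..n} \<Longrightarrow> j' < j \<Longrightarrow> j < d \<Longrightarrow> V i j < V i j'"
    and "\<And>i i' j j'. i \<in> {1..n} \<Longrightarrow> i' \<in> {1..n} \<Longrightarrow> j < d \<Longrightarrow> j' < d \<Longrightarrow>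
      V i j = V i' j' \<Longrightarrow> j = j'"
    and "\<And>i i' j. i \<in> {1..n} \<Longrightarrow> i' \<in> {1..n} \<Longrightarrow> Suc j < d \<Longrightarrow>
      V i j = V i' j \<Longrightarrow> V i (Suc j) = V i' (Suc j)"
  shows "coloring_rule d 1 n (\<lambda>_. 0) (induced_preorder n d V)"
  unfolding coloring_rule_def
proof (intro conjI impI)
  show "\<forall>i\<in>{1..n}. \<forall>i'\<in>{1..n}. i < i' \<longrightarrow> (0::nat) < 0" if "d = 0"
    using assms(1)[OF that] by auto
  show "\<forall>i\<in>{1..n}. \<forall>i'\<in>{1..n}. i < i' \<longrightarrow> pre_strict (induced_preorder n d V) (i, 0) (i', 0)"
    if "1 \<le> d"
    using that assms(2) by (simp add: pre_strict_induced_preorder_iff)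
  show "\<forall>i\<in>{1..n}. \<forall>j<d. \<forall>j'<d. j' < j \<longrightarrow> pre_strict (induced_preorder n d V) (i, j) (i, j')"
    using assms(3) by (simp add: pre_strict_induced_preorder_iff)
  show "\<forall>i\<in>{1..n}. \<forall>i'\<in>{1..n}. \<forall>j<d. \<forall>j'<d.
      pre_equiv (induced_preorder n d V) (i, j) (i', j') \<longrightarrow> j = j'"
    using assms(4) by (simp add: pre_equiv_induced_preorder_iff)
  show "\<forall>i\<in>{1..n}. \<forall>i'\<in>{1..n}. \<forall>j<d. 0 < j \<longrightarrow>
      \<not> pre_equiv (induced_preorder n d V) (i, j) (i', j) \<longrightarrow>
      \<not> pre_equiv (induced_preorder n d V) (i, j - 1) (i', j - 1)"
  proof (intro ballI allI impI)
    fix i i' j assume "i \<in> {1..n}" "i' \<in> {1..n}" "j < d" "0 < j"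
      "\<not> pre_equiv (induced_preorder n d V) (i, j) (i', j)"
    then show "\<not> pre_equiv (induced_preorder n d V) (i, j - 1) (i', j - 1)"
      using assms(5)[of i i' "j - 1"] by (auto simp: pre_equiv_induced_preorder_iff)
  qed
qed (simp_all add: total_preorder_on_induced_preorder)

lemma satisfies_CR_induced_preorder:
  assumes "bij_betw p {1..n} e" "\<And>i. i \<in> {1..n} \<Longrightarrow> fst (p i) = 0"
    and "\<And>i j. i \<in> {1..n} \<Longrightarrow> j < d \<Longrightarrow> V i j = snd (p i) ! j"
  shows "satisfies_CR d n (\<lambda>_. 0) (induced_preorder n d V) e"
  unfolding satisfies_CR_def using assms by (auto simp: induced_preorder_iff)

lemma inj_on_first_suffix_code:
  assumes "strict_mono g"
  shows "inj_on (\<lambda>u. snd u ! 0) (apsnd (suffix_codes g) ` ord_set d 1)"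
proof (cases "d = 0")
  case True
  then show ?thesis
    by (simp add: ord_set_def)
next
  case False
  have "inj_on (\<lambda>x. g (list_encode (snd x))) (ord_set d 1)"
    using assms by (auto simp: inj_on_def ord_set_def strict_mono_eq list_encode_eq)
  then show ?thesis
    using False by (intro inj_on_imageI) (auto simp: inj_on_def ord_set_def)
qed

lemma coloring_rule_induced_by_suffix_codes:
  assumes g: "strict_mono g"
    and A: "\<And>i. i \<in> {1..n} \<Longrightarrow> length (A i) = d"
    and sorted: "\<And>i i'. i \<in> {1..n} \<Longrightarrow> i' \<in> {1..n} \<Longrightarrow> i < i' \<Longrightarrow> 0 < d \<Longrightarrow>
      suffix_codes g (A i) ! 0 < suffix_codes g (A i') ! 0"
    and "d = 0 \<Longrightarrow> n \<le> 1"
  shows "coloring_rule d 1 n (\<lambda>_. 0) (induced_preorder n d (\<lambda>i j. suffix_codes g (A i) ! j))"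
proof (rule coloring_rule_induced_preorder)
  show "suffix_codes g (A i) ! j < suffix_codes g (A i) ! j'"
    if "i \<in> {1..n}" "j' < j" "j < d" for i j j'
    using suffix_codes_strict_antimono[OF g that(2)] A[OF that(1)] that(3) by simp
  show "j = j'" if "i \<in> {1..n}" "i' \<in> {1..n}" "j < d" "j' < d"
    and "suffix_codes g (A i) ! j = suffix_codes g (A i') ! j'" for i i' j j'
    by (rule suffix_codes_nth_eq_imp_same_index[OF g _ _ _ that(5)])
      (use A[OF that(1)] A[OF that(2)] that(3,4) in simp_all)
  show "suffix_codes g (A i) ! Suc j = suffix_codes g (A i') ! Suc j"
    if "i \<in> {1..n}" "i' \<in> {1..n}" "Suc j < d"
    and "suffix_codes g (A i) ! j = suffix_codes g (A i') ! j" for i i' j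
    by (rule suffix_codes_nth_eq_imp_nth_Suc_eq[OF g _ _ that(4)])
      (use A[OF that(1)] A[OF that(2)] that(3) in simp_all)
qed (use assms in simp_all)

lemma coloring_rule_for_edge_of_suffix_codes:
  assumes g: "strict_mono g"
    and e: "e \<subseteq> apsnd (suffix_codes g) ` ord_set d 1" "finite e" "card e = n"
  shows "\<exists>Y R. coloring_rule d 1 n Y R \<and> satisfies_CR d n Y R e"
proof -
  obtain p where p: "bij_betw p {1..n} e"
    and sorted: "\<And>i i'. i \<in> {1..n} \<Longrightarrow> i' \<in> {1..n} \<Longrightarrow> i < i' \<Longrightarrow> snd (p i) ! 0 < snd (p i') ! 0"
    using ex_enumeration_sorted_by[of e "\<lambda>u. snd u ! 0"] inj_on_subset[OF inj_on_first_suffix_code[OF g] e(1)]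
      e(2,3) by metis
  have "\<forall>i\<in>{1..n}. \<exists>as. length as = d \<and> p i = (0, suffix_codes g as)"
    using bij_betwE[OF p] e(1) by (fastforce simp: ord_set_def)
  then obtain A where A: "\<And>i. i \<in> {1..n} \<Longrightarrow> length (A i) = d"
    and p_A: "\<And>i. i \<in> {1..n} \<Longrightarrow> p i = (0, suffix_codes g (A i))"
    by metis
  have "n \<le> 1" if "d = 0"
  proof -
    have "e \<subseteq> {(0, [])}"
      using that e(1) by (auto simp: ord_set_def suffix_codes_def)
    then show ?thesis
      using e(3) card_mono[of "{(0::nat, []::nat list)}" e] by simp
  qed
  then have "coloring_rule d 1 n (\<lambda>_. 0) (induced_preorder n d (\<lambda>i j. suffix_codes g (A i) ! j))"
    using coloring_rule_induced_by_suffix_codes[OF g, of n A] sorted A p_A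
    by (simp del: nth_suffix_codes)
  moreover have "satisfies_CR d n (\<lambda>_. 0) (induced_preorder n d (\<lambda>i j. suffix_codes g (A i) ! j)) e"
    by (rule satisfies_CR_induced_preorder[OF p]) (simp_all add: p_A)
  ultimately show ?thesis
    by blast
qed

lemma order_equiv_suffix_codes_image:
  assumes g: "strict_mono g"
  shows "order_equiv (apsnd (suffix_codes g) ` ord_set d k) (ord_set d k)"
proof (rule order_equiv_image)
  show "inj_on (apsnd (suffix_codes g)) (ord_set d k)"
    by (rule inj_on_subset[of _ UNIV]) (simp_all add: inj_suffix_codes[OF g])
  show "ord_less (apsnd (suffix_codes g) x) (apsnd (suffix_codes g) y) \<longleftrightarrow> ord_less x y"
    if "x \<in> ord_set d k" "y \<in> ord_set d k" for x y
    using that by (intro ord_less_apsnd_suffix_codes_iff[OF g]) (auto simp: ord_set_def)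
qed

theorem lemma8p2:
  fixes n d :: nat and G :: "nat set"
  assumes "infinite G"
  shows "\<exists>H \<subseteq> ord_set d 1. order_equiv H (ord_set d 1) \<and>
    (\<forall>e. e \<subseteq> H \<and> finite e \<and> card e = n \<longrightarrow>
       (\<exists>Y R. coloring_rule d 1 n Y R \<and> satisfies_CR d n Y R e) \<and>
       (\<forall>x\<in>e. \<forall>j<d. snd x ! j \<in> G))"
proof (intro exI[of _ "apsnd (suffix_codes (enumerate G)) ` ord_set d 1"] conjI allI impI)
  let ?g = "enumerate G"
  let ?H = "apsnd (suffix_codes ?g) ` ord_set d 1"
  have g: "strict_mono ?g"
    using assms by (rule strict_mono_enumerate)
  show "?H \<subseteq> ord_set d 1"
    by (auto simp: ord_set_def)
  show "order_equiv ?H (ord_set d 1)"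
    using order_equiv_suffix_codes_image[OF g] .
  fix e assume e: "e \<subseteq> ?H \<and> finite e \<and> card e = n"
  then show "\<exists>Y R. coloring_rule d 1 n Y R \<and> satisfies_CR d n Y R e"
    using coloring_rule_for_edge_of_suffix_codes[OF g] by blast
  show "\<forall>x\<in>e. \<forall>j<d. snd x ! j \<in> G"
    using e assms by (auto simp: ord_set_def enumerate_in_set)
qed

end
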